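(* Let $M$ be a compact manifold without boundary, $\mathrm{d}$ a metric on $M$ defining its topology, and $f$ a bi-Lipschitz homeomorphism of $(M,\mathrm{d})$ such that $\mathrm{d}$ is $f$-hyperbolic. If $f$ is persistent or has the weak shadowing property, then $f$ is Lipschitz structurally stable: for every $\epsilon>0$ there is $\delta>0$ such that for every bi-Lipschitz homeomorphism $g$ of $(M,\mathrm{d})$ with $\mathrm{d}_L(f,g)<\delta$ there is a homeomorphism $h\colon M\to M$ with $f\circ h=h\circ g$ and $\mathrm{d}_{C^0}(h,\mathrm{id})<\epsilon$.
   Context: A metric $\mathrm{d}$ defining the topology is $f$-hyperbolic if there are $\delta_0>0$, $\lambda>1$ such that $\mathrm{d}(x,y)<\delta_0$ implies $\max\{\mathrm{d}(f(x),f(y)),\mathrm{d}(f^{-1}(x),f^{-1}(y))\}\ge\lambda\,\mathrm{d}(x,y)$. $\mathrm{d}_{C^0}(f,g)=\max_{x}\mathrm{d}(f(x),g(x))+\max_x\mathrm{d}(f^{-1}(x),g^{-1}(x))$; $\mathrm{d}'_L(f,g)=\sup_{x\ne y}\left|\log\frac{\mathrm{d}(f(x),f(y))}{\mathrm{d}(g(x),g(y))}\right|$; $\mathrm{d}_L(f,g)=\mathrm{d}_{C^0}(f,g)+\mathrm{d}'_L(f,g)+\mathrm{d}'_L(f^{-1},g^{-1})$. $f$ has the weak shadowing property if for all $\epsilon>0$ there is $\delta>0$ such that whenever $g$ is a homeomorphism with $\mathrm{d}_{C^0}(f,g)<\delta$, for every $x\in M$ there is $y\in M$ with $\mathrm{d}(f^n(y),g^n(x))<\epsilon$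 for all $n\in\mathbb Z$. $f$ is persistent if for all $\epsilon>0$ there is $\delta>0$ such that whenever $g$ is a homeomorphism with $\mathrm{d}_{C^0}(f,g)<\delta$, for every $x\in M$ there is $y\in M$ with $\mathrm{d}(f^n(x),g^n(y))<\epsilon$ for all $n\in\mathbb Z$. *)

theory Defs
  imports "HOL-Analysis.Analysis"
begin

definition closed_manifold :: "'e::euclidean_space itself \<Rightarrow> 'a::metric_space set \<Rightarrow> bool" where
  "closed_manifold E M \<longleftrightarrow> compact M \<and>
     (\<forall>x\<in>M. \<exists>U (V::'e set). openin (top_of_set M) U \<and> x \<in> U \<and> open V \<and> U homeomorphic V)"

definition homeo :: "('a::topological_space \<Rightarrow> 'a) \<Rightarrow> bool" where
  "homeo f \<longleftrightarrow> (\<exists>g. homeomorphism UNIV UNIV f g)"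

definition bilipschitz_homeo :: "('a::metric_space \<Rightarrow> 'a) \<Rightarrow> bool" where
  "bilipschitz_homeo f \<longleftrightarrow> homeo f \<and> (\<exists>C. C-lipschitz_on UNIV f) \<and> (\<exists>C. C-lipschitz_on UNIV (inv f))"

definition zpow :: "('a \<Rightarrow> 'a) \<Rightarrow> int \<Rightarrow> 'a \<Rightarrow> 'a" where
  "zpow f n = (if 0 \<le> n then f ^^ nat n else (inv f) ^^ nat (- n))"

definition f_hyperbolic :: "('a::metric_space \<Rightarrow> 'a) \<Rightarrow> bool" where
  "f_hyperbolic f \<longleftrightarrow> (\<exists>\<delta>0>0. \<exists>lam>1. \<forall>x y. dist x y < \<delta>0 \<longrightarrow>
      max (dist (f x) (f y)) (dist (inv f x) (inv f y)) \<ge> lam * dist x y)"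

definition dC0 :: "('a::metric_space \<Rightarrow> 'a) \<Rightarrow> ('a \<Rightarrow> 'a) \<Rightarrow> real" where
  "dC0 f g = (SUP x. dist (f x) (g x)) + (SUP x. dist (inv f x) (inv g x))"

definition dL' :: "('a::metric_space \<Rightarrow> 'a) \<Rightarrow> ('a \<Rightarrow> 'a) \<Rightarrow> real" where
  "dL' f g = (SUP p\<in>{(x,y). x \<noteq> y}. \<bar>ln (dist (f (fst p)) (f (snd p)) / dist (g (fst p)) (g (snd p)))\<bar>)"

definition dL :: "('a::metric_space \<Rightarrow> 'a) \<Rightarrow> ('a \<Rightarrow> 'a) \<Rightarrow> real" where
  "dL f g = dC0 f g + dL' f g + dL' (inv f) (inv g)"

definition weak_shadowing :: "('a::metric_space \<Rightarrow> 'a) \<Rightarrow> bool" where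
  "weak_shadowing f \<longleftrightarrow> (\<forall>\<epsilon>>0. \<exists>\<delta>>0. \<forall>g. homeo g \<and> dC0 f g < \<delta> \<longrightarrow>
     (\<forall>x. \<exists>y. \<forall>n::int. dist (zpow f n y) (zpow g n x) < \<epsilon>))"

definition persistent :: "('a::metric_space \<Rightarrow> 'a) \<Rightarrow> bool" where
  "persistent f \<longleftrightarrow> (\<forall>\<epsilon>>0. \<exists>\<delta>>0. \<forall>g. homeo g \<and> dC0 f g < \<delta> \<longrightarrow>
     (\<forall>x. \<exists>y. \<forall>n::int. dist (zpow f n x) (zpow g n y) < \<epsilon>))"

definition lipschitz_structurally_stable :: "('a::metric_space \<Rightarrow> 'a) \<Rightarrow> bool" where
  "lipschitz_structurally_stable f \<longleftrightarrow> (\<forall>\<epsilon>>0. \<exists>\<delta>>0. \<forall>g. bilipschitz_homeo g \<and> dL f g < \<delta> \<longrightarrow>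
     (\<exists>h. homeo h \<and> f \<circ> h = h \<circ> g \<and> dC0 h id < \<epsilon>))"

end

theory Submission
  imports Defs "HOL-Homology.Invariance_of_Domain"
begin

(* The proof follows Walters' argument that expansive maps with a shadowing-type
   property are topologically stable, with expansivity of the perturbation supplied
   by Lipschitz closeness.
   (1) If d is f-hyperbolic at scale d0 with rate lam > 1, every c < d0 is an
       expansivity constant of f: a bounded sequence a_k \<ge> 0 with
       max (a_(k+1)) (a_(k-1)) \<ge> lam * a_k must vanish.
   (2) If d_L(f,g) = D < ln lam, then d is g-hyperbolic at the same scale with rate
       exp(-D) * lam > 1, so g is expansive with the same constants; also
       d_C0(f,g) \<le> d_L(f,g).
   (3) If every F-orbit is e-traced by a G-orbit and both maps are 2e-expansive, the
       tracing point is unique; the tracing map k is injective, continuous (closed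
       graph in a compact space), conjugates F to G and moves points by at most e.
   (4) On a compact topological manifold, continuous injective self-maps close to the
       identity are surjective (invariance of domain), so k is a homeomorphism.
   Persistence makes f-orbits traced by g-orbits (h = inverse of k); weak shadowing
   makes g-orbits traced by f-orbits (h = k). *)

section \<open>Homeomorphisms and their integer iterates\<close>

lemma homeo_props:
  assumes "homeo F"
  shows "bij F" "continuous_on UNIV F" "continuous_on UNIV (inv_into UNIV F)"
    "inv_into UNIV (inv_into UNIV F) = F"
proof -
  obtain G where h: "homeomorphism UNIV UNIV F G" using assms homeo_def by blast
  have inverse: "\<And>x. G (F x) = x" "\<And>y. F (G y) = y" using h by (auto simp: homeomorphism_def)
  have invF: "inv_into UNIV F = G" by (rule inv_equality) (use inverse in auto)
  show "bij F" by (metis inverse bij_def injI surjI)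
  show "continuous_on UNIV F" using h by (simp add: homeomorphism_def)
  show "continuous_on UNIV (inv_into UNIV F)" using h invF by (simp add: homeomorphism_def)
  show "inv_into UNIV (inv_into UNIV F) = F"
    unfolding invF by (rule inv_equality) (use inverse in auto)
qed

lemma homeo_inv:
  assumes "homeo F" shows "homeo (inv_into UNIV F)"
proof -
  obtain G where h: "homeomorphism UNIV UNIV F G" using assms homeo_def by blast
  have "inv_into UNIV F = G" by (rule inv_equality) (use h in \<open>auto simp: homeomorphism_def\<close>)
  then show ?thesis unfolding homeo_def using homeomorphism_symD[OF h] by blast
qed

lemma zpow_0 [simp]: "zpow F 0 x = x"
  by (simp add: zpow_def)

lemma zpow_succ:
  assumes "bij F" shows "zpow F (n + 1) x = F (zpow F n x)"
proof (cases "0 \<le> n")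
  case True
  then have "nat (n + 1) = Suc (nat n)" by simp
  then show ?thesis using True by (simp add: zpow_def)
next
  case False
  then obtain m where m: "nat (- n) = Suc m"
    by (metis gr0_implies_Suc zero_less_nat_eq neg_0_less_iff_less not_le)
  then have "n + 1 = - int m" using False by linarith
  then have "zpow F (n + 1) x = (inv_into UNIV F ^^ m) x" by (simp add: zpow_def)
  moreover have "zpow F n x = (inv_into UNIV F ^^ Suc m) x" using False m by (simp add: zpow_def)
  ultimately show ?thesis using assms by (simp add: bij_inv_eq_iff)
qed

lemma zpow_succ_right:
  assumes "bij F" shows "zpow F (n + 1) x = zpow F n (F x)"
proof (cases "0 \<le> n")
  case True
  then have "nat (n + 1) = Suc (nat n)" by simp
  then show ?thesis using True by (simp add: zpow_def funpow_Suc_right funpow_swap1)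
next
  case False
  then obtain m where m: "nat (- n) = Suc m"
    by (metis gr0_implies_Suc zero_less_nat_eq neg_0_less_iff_less not_le)
  then have "n + 1 = - int m" using False by linarith
  then have "zpow F (n + 1) x = (inv_into UNIV F ^^ m) x" by (simp add: zpow_def)
  moreover have "zpow F n (F x) = (inv_into UNIV F ^^ Suc m) (F x)"
    using False m by (simp add: zpow_def)
  ultimately show ?thesis using assms by (simp add: funpow_swap1 bij_is_inj)
qed

lemma zpow_pred:
  assumes "bij F" shows "zpow F (n - 1) x = inv_into UNIV F (zpow F n x)"
  using zpow_succ[OF assms, of "n - 1" x] assms by (simp add: bij_inv_eq_iff)

lemma continuous_on_funpow:
  fixes F :: "'a::topological_space \<Rightarrow> 'a"
  assumes "continuous_on UNIV F" shows "continuous_on UNIV (F ^^ n)"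
proof (induction n)
  case 0 then show ?case by (simp add: continuous_on_id)
next
  case (Suc n)
  then show ?case using continuous_on_compose[OF Suc continuous_on_subset[OF assms]] by simp
qed

lemma continuous_on_zpow:
  assumes "homeo F" shows "continuous_on UNIV (zpow F n)"
  using homeo_props[OF assms] continuous_on_funpow by (cases "0 \<le> n") (simp_all add: zpow_def)

section \<open>Hyperbolic metrics and expansivity\<close>

definition hyperbolic_at_scale :: "('a::metric_space \<Rightarrow> 'a) \<Rightarrow> real \<Rightarrow> real \<Rightarrow> bool" where
  "hyperbolic_at_scale F d0 lam \<longleftrightarrow> (\<forall>x y. dist x y < d0 \<longrightarrow>
     lam * dist x y \<le> max (dist (F x) (F y)) (dist (inv_into UNIV F x) (inv_into UNIV F y)))"

lemma f_hyperbolic_iff: "f_hyperbolic f \<longleftrightarrow> (\<exists>d0>0. \<exists>lam>1. hyperbolic_at_scale f d0 lam)"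
  by (simp add: f_hyperbolic_def hyperbolic_at_scale_def)

definition expansivity_constant :: "('a::metric_space \<Rightarrow> 'a) \<Rightarrow> real \<Rightarrow> bool" where
  "expansivity_constant F c \<longleftrightarrow> (\<forall>x y. (\<forall>n. dist (zpow F n x) (zpow F n y) \<le> c) \<longrightarrow> x = y)"

text \<open>A sequence that grows by the factor \<open>\<mu>\<close> from index 0 to 1 and satisfies the
  two-sided growth condition keeps growing geometrically forever, so it is unbounded
  unless \<open>a 0 = 0\<close>.\<close>

lemma two_sided_growth_forward:
  fixes a :: "int \<Rightarrow> real"
  assumes nonneg: "\<And>k. a k \<ge> 0" and bounded: "\<And>k. a k < B" and mu: "\<mu> > 1"
    and growth: "\<And>k. \<mu> * a k \<le> max (a (k + 1)) (a (k - 1))"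
    and start: "\<mu> * a 0 \<le> a 1"
  shows "a 0 = 0"
proof (rule ccontr)
  assume "a 0 \<noteq> 0"
  then have pos: "a 0 > 0" using nonneg[of 0] by linarith
  have geometric: "\<mu> * a (int n) \<le> a (int n + 1) \<and> \<mu> ^ n * a 0 \<le> a (int n)" for n
  proof (induction n)
    case 0 then show ?case using start by simp
  next
    case (Suc n)
    have "a (int n) > 0" using Suc pos mu by (smt (verit) zero_less_power mult_pos_pos)
    then have increase: "a (int n) < a (int n + 1)" "a (int n + 1) < \<mu> * a (int n + 1)"
      using Suc mu by (smt (verit) mult_less_cancel_right1)+
    then have "\<mu> * a (int n + 1) \<le> a (int n + 1 + 1)"
      using growth[of "int n + 1"] by (auto simp: max_def split: if_splits)
    moreover have "\<mu> * (\<mu> ^ n * a 0) \<le> \<mu> * a (int n)" using Suc mu by (intro mult_left_mono) auto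
    ultimately show ?case using Suc by (simp add: add.commute mult.assoc)
  qed
  obtain n where "B / a 0 < \<mu> ^ n" using real_arch_pow mu by blast
  then have "B < \<mu> ^ n * a 0" using pos by (simp add: pos_divide_less_eq)
  with geometric[of n] bounded[of "int n"] show False by linarith
qed

text \<open>Running the sequence backwards if needed: a bounded nonnegative sequence with
  \<open>max (a (k+1)) (a (k-1)) \<ge> \<mu> * a k\<close> vanishes at 0.\<close>

lemma two_sided_growth_vanishes:
  fixes a :: "int \<Rightarrow> real"
  assumes nonneg: "\<And>k. a k \<ge> 0" and bounded: "\<And>k. a k < B" and mu: "\<mu> > 1"
    and growth: "\<And>k. \<mu> * a k \<le> max (a (k + 1)) (a (k - 1))"
  shows "a 0 = 0"
proof (cases "\<mu> * a 0 \<le> a 1")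
  case True then show ?thesis using two_sided_growth_forward[OF nonneg bounded mu growth] by blast
next
  case False
  then have "\<mu> * a 0 \<le> a (- 1)" using growth[of 0] by (simp add: max_def split: if_splits)
  moreover have "\<mu> * a (- k) \<le> max (a (- (k + 1))) (a (- (k - 1)))" for k
  proof -
    have "- k + 1 = - (k - 1)" "- k - 1 = - (k + 1)" by simp_all
    then show ?thesis using growth[of "- k"] by (simp only: max.commute)
  qed
  ultimately have "(\<lambda>k. a (- k)) 0 = 0"
    using two_sided_growth_forward[of "\<lambda>k. a (- k)" B \<mu>] nonneg bounded mu by simp
  then show ?thesis by simp
qed

text \<open>Step (1): distances along two orbits that stay \<open>c\<close>-close satisfy the growth
  condition and are bounded by \<open>d0\<close>, so they vanish.\<close>

lemma hyperbolic_imp_expansive: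
  assumes "bij F" "lam > 1" "hyperbolic_at_scale F d0 lam" "c < d0"
  shows "expansivity_constant F c"
  unfolding expansivity_constant_def
proof (intro allI impI)
  fix x y assume close: "\<forall>n. dist (zpow F n x) (zpow F n y) \<le> c"
  define a where "a k = dist (zpow F k x) (zpow F k y)" for k
  have "a 0 = 0"
  proof (rule two_sided_growth_vanishes[of a d0 lam])
    show "a k < d0" for k using close assms(4) by (auto simp: a_def intro: le_less_trans)
    then show "lam * a k \<le> max (a (k + 1)) (a (k - 1))" for k
      using assms(3) unfolding hyperbolic_at_scale_def a_def
        zpow_succ[OF assms(1)] zpow_pred[OF assms(1)] by blast
  qed (use assms in \<open>auto simp: a_def\<close>)
  then show "x = y" by (simp add: a_def)
qed

section \<open>Lipschitz closeness preserves hyperbolicity\<close>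

lemma bilipschitz_inv:
  assumes "bilipschitz_homeo f" shows "bilipschitz_homeo (inv_into UNIV f)"
  using assms homeo_inv homeo_props(4) unfolding bilipschitz_homeo_def by metis

lemma bilipschitz_constants:
  assumes "bilipschitz_homeo f"
  obtains L L' where "L > 0" "L' > 0" "\<And>x y. dist (f x) (f y) \<le> L * dist x y"
    "\<And>x y. dist x y \<le> L' * dist (f x) (f y)"
proof -
  obtain C C' where C: "C-lipschitz_on UNIV f" and C': "C'-lipschitz_on UNIV (inv_into UNIV f)"
    and "homeo f" using assms unfolding bilipschitz_homeo_def by blast
  then have "bij f" using homeo_props by blast
  have nonneg: "C \<ge> 0" "C' \<ge> 0" using C C' by (auto simp: lipschitz_on_def)
  have "dist (f x) (f y) \<le> (C + 1) * dist x y" for x y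
    using C lipschitz_onD[OF C, of x y] by (smt (verit) UNIV_I mult_right_mono zero_le_dist)
  moreover have "dist x y \<le> (C' + 1) * dist (f x) (f y)" for x y
  proof -
    have "dist x y = dist (inv_into UNIV f (f x)) (inv_into UNIV f (f y))"
      using \<open>bij f\<close> by (simp add: bij_is_inj)
    also have "\<dots> \<le> C' * dist (f x) (f y)" using C' by (simp add: lipschitz_on_def)
    also have "\<dots> \<le> (C' + 1) * dist (f x) (f y)" by (simp add: distrib_right)
    finally show ?thesis .
  qed
  ultimately show ?thesis using that[of "C + 1" "C' + 1"] nonneg by auto
qed

text \<open>For bi-Lipschitz maps the log-ratios entering \<open>dL'\<close> are bounded, so the
  supremum is a genuine upper bound.\<close>

lemma log_ratio_bounded:
  fixes f g :: "'a::metric_space \<Rightarrow> 'a"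
  assumes "bilipschitz_homeo f" "bilipschitz_homeo g"
  shows "\<exists>K. \<forall>x y. x \<noteq> y \<longrightarrow> \<bar>ln (dist (f x) (f y) / dist (g x) (g y))\<bar> \<le> K"
proof -
  obtain Lf Lf' where f: "Lf > 0" "Lf' > 0" "\<And>x y. dist (f x) (f y) \<le> Lf * dist x y"
    "\<And>x y. dist x y \<le> Lf' * dist (f x) (f y)" using bilipschitz_constants[OF assms(1)] by blast
  obtain Lg Lg' where g: "Lg > 0" "Lg' > 0" "\<And>x y. dist (g x) (g y) \<le> Lg * dist x y"
    "\<And>x y. dist x y \<le> Lg' * dist (g x) (g y)" using bilipschitz_constants[OF assms(2)] by blast
  have "\<bar>ln (dist (f x) (f y) / dist (g x) (g y))\<bar> \<le> \<bar>ln (Lf * Lg')\<bar> + \<bar>ln (Lf' * Lg)\<bar>"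
    if "x \<noteq> y" for x y
  proof -
    define d where "d = dist x y"
    have "d > 0" using that by (simp add: d_def)
    have fpos: "dist (f x) (f y) > 0" and gpos: "dist (g x) (g y) > 0"
      using f(4)[of x y] g(4)[of x y] \<open>d > 0\<close> unfolding d_def
      by (smt (verit) mult_nonneg_nonpos zero_le_dist f(2) g(2))+
    define r where "r = dist (f x) (f y) / dist (g x) (g y)"
    have "r > 0" using fpos gpos by (simp add: r_def)
    have "dist (f x) (f y) \<le> Lf * (Lg' * dist (g x) (g y))"
      using f(3)[of x y] g(4)[of x y] f(1) by (smt (verit) mult_left_mono)
    then have "r \<le> Lf * Lg'" using gpos by (simp add: r_def divide_le_eq mult.assoc)
    then have upper: "ln r \<le> ln (Lf * Lg')" using \<open>r > 0\<close> by simp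
    have "dist (g x) (g y) \<le> Lg * (Lf' * dist (f x) (f y))"
      using g(3)[of x y] f(4)[of x y] g(1) by (smt (verit) mult_left_mono)
    then have "1 / (Lf' * Lg) \<le> r" using fpos gpos f(2) g(1) by (simp add: r_def field_simps)
    then have "ln (1 / (Lf' * Lg)) \<le> ln r" using \<open>r > 0\<close> f(2) g(1) by (subst ln_le_cancel_iff) auto
    then have lower: "- ln (Lf' * Lg) \<le> ln r" using f(2) g(1) by (simp add: ln_div)
    show ?thesis using upper lower unfolding r_def by linarith
  qed
  then show ?thesis by blast
qed

lemma log_ratio_le_dL':
  assumes "bilipschitz_homeo f" "bilipschitz_homeo g" "x \<noteq> y"
  shows "\<bar>ln (dist (f x) (f y) / dist (g x) (g y))\<bar> \<le> dL' f g"
proof -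
  obtain K where K: "\<And>x y. x \<noteq> y \<Longrightarrow> \<bar>ln (dist (f x) (f y) / dist (g x) (g y))\<bar> \<le> K"
    using log_ratio_bounded[OF assms(1,2)] by blast
  let ?ratio = "\<lambda>p. \<bar>ln (dist (f (fst p)) (f (snd p)) / dist (g (fst p)) (g (snd p)))\<bar>"
  have "bdd_above (?ratio ` {(x, y). x \<noteq> y})" by (rule bdd_aboveI2[of _ _ K]) (auto intro: K)
  then have "?ratio (x, y) \<le> (SUP p\<in>{(x, y). x \<noteq> y}. ?ratio p)"
    by (rule cSUP_upper[rotated]) (simp add: assms(3))
  then show ?thesis by (simp add: dL'_def)
qed

lemma dist_le_exp_dL':
  assumes "bilipschitz_homeo f" "bilipschitz_homeo g" "dL' f g \<le> D"
  shows "dist (f x) (f y) \<le> exp D * dist (g x) (g y)"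
proof (cases "x = y")
  case False
  have "inj f" "inj g"
    using assms(1,2) homeo_props(1) bij_is_inj unfolding bilipschitz_homeo_def by blast+
  then have pos: "dist (f x) (f y) > 0" "dist (g x) (g y) > 0" using False by (simp_all add: inj_eq)
  define r where "r = dist (f x) (f y) / dist (g x) (g y)"
  have "r > 0" using pos by (simp add: r_def)
  have "ln r \<le> D" using log_ratio_le_dL'[OF assms(1,2) False] assms(3) unfolding r_def by linarith
  then have "r \<le> exp D" using \<open>r > 0\<close> by (metis exp_le_cancel_iff exp_ln)
  then show ?thesis using pos(2) by (simp add: r_def divide_le_eq)
qed simp

text \<open>Nonnegativity of both kinds of distances; \<open>dL'\<close> is a supremum over pairs of
  distinct points and so needs two such points.\<close>

lemma dL'_nonneg:
  fixes f g :: "'a::metric_space \<Rightarrow> 'a"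
    and x y :: 'a
  assumes "bilipschitz_homeo f" "bilipschitz_homeo g" "x \<noteq> y"
  shows "0 \<le> dL' f g"
  using log_ratio_le_dL'[OF assms] by linarith

lemma dC0_nonneg:
  assumes "compact (UNIV :: 'a::metric_space set)"
  shows "0 \<le> dC0 f (g :: 'a \<Rightarrow> 'a)"
proof -
  obtain B where "\<forall>x\<in>UNIV. \<forall>y\<in>UNIV. dist (x::'a) y \<le> B"
    using compact_imp_bounded[OF assms] unfolding bounded_two_points by (elim exE) blast
  then have B: "\<And>x y::'a. dist x y \<le> B" by simp
  have "0 \<le> (SUP x. dist (F x) (G x))" for F G :: "'a \<Rightarrow> 'a"
  proof -
    have "bdd_above (range (\<lambda>x. dist (F x) (G x)))" by (rule bdd_aboveI2[of _ _ B]) (rule B)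
    then have "dist (F undefined) (G undefined) \<le> (SUP x. dist (F x) (G x))"
      by (rule cSUP_upper[OF UNIV_I])
    then show ?thesis by (rule order_trans[OF zero_le_dist])
  qed
  then show ?thesis by (simp add: dC0_def)
qed

text \<open>On a compact space with two distinct points, each summand of \<open>dL\<close> is
  nonnegative, so \<open>dL\<close> dominates all of them.\<close>

lemma dL_dominates:
  assumes "compact (UNIV :: 'a::metric_space set)" "x \<noteq> (y::'a)"
    and "bilipschitz_homeo f" "bilipschitz_homeo (g :: 'a \<Rightarrow> 'a)"
  shows "dC0 f g \<le> dL f g" "dL' f g \<le> dL f g"
    "dL' (inv_into UNIV f) (inv_into UNIV g) \<le> dL f g"
  using dC0_nonneg[OF assms(1), of f g] dL'_nonneg[OF assms(3,4,2)]
    dL'_nonneg[OF bilipschitz_inv[OF assms(3)] bilipschitz_inv[OF assms(4)] assms(2)]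
  by (auto simp: dL_def)

lemma hyperbolicity_perturbation:
  fixes f g :: "'a::metric_space \<Rightarrow> 'a"
  assumes bf: "bilipschitz_homeo f" and bg: "bilipschitz_homeo g"
    and hyp: "hyperbolic_at_scale f d0 lam"
    and forward: "dL' f g \<le> D" and backward: "dL' (inv_into UNIV f) (inv_into UNIV g) \<le> D"
  shows "hyperbolic_at_scale g d0 (exp (- D) * lam)"
  unfolding hyperbolic_at_scale_def
proof (intro allI impI)
  fix x y :: 'a assume xy: "dist x y < d0"
  let ?m = "max (dist (g x) (g y)) (dist (inv_into UNIV g x) (inv_into UNIV g y))"
  have "dist (f x) (f y) \<le> exp D * dist (g x) (g y)" by (rule dist_le_exp_dL'[OF bf bg forward])
  moreover have "dist (inv_into UNIV f x) (inv_into UNIV f y)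
      \<le> exp D * dist (inv_into UNIV g x) (inv_into UNIV g y)"
    by (rule dist_le_exp_dL'[OF bilipschitz_inv[OF bf] bilipschitz_inv[OF bg] backward])
  moreover have "lam * dist x y
      \<le> max (dist (f x) (f y)) (dist (inv_into UNIV f x) (inv_into UNIV f y))"
    using hyp xy unfolding hyperbolic_at_scale_def by blast
  ultimately have "lam * dist x y \<le> exp D * ?m"
    by (smt (verit) exp_gt_zero max.cobounded1 max.cobounded2 mult_left_mono)
  then have "exp (- D) * (lam * dist x y) \<le> exp (- D) * (exp D * ?m)"
    by (intro mult_left_mono) auto
  also have "\<dots> = ?m" by (simp add: mult.assoc[symmetric] exp_add[symmetric])
  finally show "exp (- D) * lam * dist x y \<le> ?m" by (simp add: mult.assoc)
qed

lemma perturbation_expansive: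
  fixes f g :: "'a::metric_space \<Rightarrow> 'a"
  assumes "compact (UNIV :: 'a set)" "a \<noteq> (b::'a)"
    and bf: "bilipschitz_homeo f" and bg: "bilipschitz_homeo g"
    and lam: "lam > 1" and hyp: "hyperbolic_at_scale f d0 lam"
    and close: "dL f g < ln lam" and "c < d0"
  shows "expansivity_constant g c"
proof (rule hyperbolic_imp_expansive)
  show "bij g" using bg homeo_props(1) unfolding bilipschitz_homeo_def by blast
  have "exp (- dL f g) * lam = exp (ln lam - dL f g)"
    using lam by (simp add: exp_diff exp_minus field_simps)
  then show "exp (- dL f g) * lam > 1" using close by simp
  show "hyperbolic_at_scale g d0 (exp (- dL f g) * lam)"
    using hyperbolicity_perturbation[OF bf bg hyp] dL_dominates[OF assms(1,2) bf bg] by blast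
qed (rule \<open>c < d0\<close>)

section \<open>Compact manifolds: small injective maps are onto\<close>

lemma manifold_compact:
  assumes "closed_manifold TYPE('e::euclidean_space) (UNIV :: 'a::metric_space set)"
  shows "compact (UNIV :: 'a set)"
  using assms unfolding closed_manifold_def by blast

lemma manifold_chart:
  fixes x :: "'a::metric_space"
  assumes "closed_manifold TYPE('e::euclidean_space) (UNIV :: 'a set)"
  obtains U and V :: "'e::euclidean_space set" and \<phi> \<psi>
  where "open U" "x \<in> U" "open V" "homeomorphism U V \<phi> \<psi>"
proof -
  obtain U and V :: "'e set"
    where U: "openin (top_of_set UNIV) U" "x \<in> U" "open V" "U homeomorphic V"
    using assms unfolding closed_manifold_def by blast
  then obtain \<phi> \<psi> where "homeomorphism U V \<phi> \<psi>" unfolding homeomorphic_def by auto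
  then show ?thesis using that U by simp
qed

text \<open>Every point of a manifold has a connected open neighbourhood (the image of a
  ball in a chart).\<close>

lemma manifold_connected_nbhd:
  fixes x :: "'a::metric_space"
  assumes "closed_manifold TYPE('e::euclidean_space) (UNIV :: 'a set)"
  obtains C where "open C" "connected C" "x \<in> C"
proof -
  obtain U and V :: "'e set" and \<phi> \<psi> where U: "open U" "x \<in> U" "open V"
    and h: "homeomorphism U V \<phi> \<psi>" by (rule manifold_chart[OF assms])
  have "\<phi> x \<in> V" using h U by (auto simp: homeomorphism_def)
  then obtain r where r: "r > 0" "ball (\<phi> x) r \<subseteq> V" using U(3) openE by blast
  have inverse: "homeomorphism V U \<psi> \<phi>" using h by (rule homeomorphism_symD)
  have "openin (top_of_set U) (\<psi> ` ball (\<phi> x) r)"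
    using homeomorphism_imp_open_map[OF inverse] r U(3) by (simp add: openin_open_eq)
  then have "open (\<psi> ` ball (\<phi> x) r)" using U(1) openin_open_trans by blast
  moreover have "connected (\<psi> ` ball (\<phi> x) r)"
    using inverse r(2) connected_continuous_image[OF _ connected_ball]
    by (meson continuous_on_subset homeomorphism_def)
  moreover have "x \<in> \<psi> ` ball (\<phi> x) r"
    using h U(2) r(1) by (metis centre_in_ball homeomorphism_def image_eqI)
  ultimately show ?thesis using that by blast
qed

text \<open>Invariance of domain transported through charts: an injective continuous map
  sending an open subset \<open>W\<close> of one chart domain into another chart domain has open image.\<close>

lemma chart_invariance_of_domain:
  fixes k :: "'a::topological_space \<Rightarrow> 'b::topological_space"
    and V1 V2 :: "'e::euclidean_space set"
  assumes h1: "homeomorphism U1 V1 \<phi>1 \<psi>1" and h2: "homeomorphism U2 V2 \<phi>2 \<psi>2"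
    and "open V1" "open U2" "open W" "W \<subseteq> U1" "k ` W \<subseteq> U2"
    and k: "continuous_on W k" "inj_on k W"
  shows "open (k ` W)"
proof -
  have back1: "\<And>w. w \<in> U1 \<Longrightarrow> \<psi>1 (\<phi>1 w) = w" and back2: "\<And>w. w \<in> U2 \<Longrightarrow> \<psi>2 (\<phi>2 w) = w"
    using h1 h2 by (auto simp: homeomorphism_def)
  have W_back: "\<psi>1 ` \<phi>1 ` W = W" using back1 \<open>W \<subseteq> U1\<close> by (force simp: image_iff)
  have "openin (top_of_set V1) (\<phi>1 ` W)"
    using homeomorphism_imp_open_map[OF h1 open_subset[OF \<open>W \<subseteq> U1\<close> \<open>open W\<close>]] .
  then have open_chartW: "open (\<phi>1 ` W)" using \<open>open V1\<close> openin_open_trans by blast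
  define K where "K = \<phi>2 \<circ> k \<circ> \<psi>1"
  have cont: "continuous_on V1 \<psi>1" "continuous_on U2 \<phi>2" "\<phi>1 ` U1 = V1"
    using h1 h2 by (simp_all add: homeomorphism_def)
  have contK: "continuous_on (\<phi>1 ` W) K" unfolding K_def
  proof (intro continuous_on_compose)
    show "continuous_on (\<phi>1 ` W) \<psi>1"
      using cont(3) \<open>W \<subseteq> U1\<close> by (metis continuous_on_subset[OF cont(1)] image_mono)
    show "continuous_on (\<psi>1 ` \<phi>1 ` W) k" using k(1) W_back by simp
    show "continuous_on (k ` \<psi>1 ` \<phi>1 ` W) \<phi>2"
      unfolding W_back using continuous_on_subset[OF cont(2) \<open>k ` W \<subseteq> U2\<close>] .
  qed
  moreover have injK: "inj_on K (\<phi>1 ` W)"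
  proof (rule inj_onI)
    fix a b assume "a \<in> \<phi>1 ` W" "b \<in> \<phi>1 ` W" and "K a = K b"
    then obtain v w where vw: "v \<in> W" "w \<in> W" "a = \<phi>1 v" "b = \<phi>1 w" by blast
    then have "v \<in> U1" "w \<in> U1" using \<open>W \<subseteq> U1\<close> by auto
    then have "\<phi>2 (k v) = \<phi>2 (k w)" using \<open>K a = K b\<close> vw back1 by (simp add: K_def)
    moreover have "k v \<in> U2" "k w \<in> U2" using vw(1,2) \<open>k ` W \<subseteq> U2\<close> by auto
    ultimately have "k v = k w" by (metis back2)
    then show "a = b" using vw k(2) by (simp add: inj_on_eq_iff)
  qed
  have "open (K ` \<phi>1 ` W)" by (rule invariance_of_domain[OF contK open_chartW injK])
  moreover have "K ` \<phi>1 ` W = \<phi>2 ` k ` W" unfolding K_def image_comp[symmetric] W_back ..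
  ultimately have "open (U2 \<inter> \<phi>2 -` (\<phi>2 ` k ` W))"
    using continuous_open_preimage[OF cont(2) \<open>open U2\<close>] by simp
  moreover have "U2 \<inter> \<phi>2 -` (\<phi>2 ` k ` W) = k ` W"
  proof
    show "U2 \<inter> \<phi>2 -` (\<phi>2 ` k ` W) \<subseteq> k ` W"
    proof
      fix z assume "z \<in> U2 \<inter> \<phi>2 -` (\<phi>2 ` k ` W)"
      then obtain w where "z \<in> U2" "w \<in> W" "\<phi>2 z = \<phi>2 (k w)" by auto
      moreover have "k w \<in> U2" using \<open>w \<in> W\<close> \<open>k ` W \<subseteq> U2\<close> by auto
      ultimately have "z = k w" by (metis back2)
      then show "z \<in> k ` W" using \<open>w \<in> W\<close> by blast
    qed
  qed (use \<open>k ` W \<subseteq> U2\<close> in blast)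
  ultimately show ?thesis by simp
qed

text \<open>Invariance of domain on the manifold: a continuous injective self-map is open
  onto its image, by working in charts around a point and around its image.\<close>

lemma manifold_open_image:
  fixes k :: "'a::metric_space \<Rightarrow> 'a"
  assumes M: "closed_manifold TYPE('e::euclidean_space) (UNIV :: 'a set)"
    and k: "continuous_on UNIV k" "inj k"
  shows "open (range k)"
  unfolding open_subopen[of "range k"]
proof
  fix y assume "y \<in> range k"
  then obtain x where y: "y = k x" by blast
  obtain U1 and V1 :: "'e set" and \<phi>1 \<psi>1 where U1: "open U1" "x \<in> U1" "open V1"
    and h1: "homeomorphism U1 V1 \<phi>1 \<psi>1" by (rule manifold_chart[OF M])
  obtain U2 and V2 :: "'e set" and \<phi>2 \<psi>2 where U2: "open U2" "k x \<in> U2"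
    and h2: "homeomorphism U2 V2 \<phi>2 \<psi>2" by (rule manifold_chart[OF M])
  define W where "W = U1 \<inter> k -` U2"
  have "open W" unfolding W_def using U1(1) U2(1) k(1) open_vimage by blast
  moreover have "W \<subseteq> U1" "k ` W \<subseteq> U2" by (auto simp: W_def)
  ultimately have "open (k ` W)"
    using chart_invariance_of_domain[OF h1 h2 U1(3) U2(1)]
      continuous_on_subset[OF k(1) subset_UNIV] inj_on_subset[OF k(2) subset_UNIV] by blast
  moreover have "y \<in> k ` W" using y U1(2) U2(2) by (simp add: W_def)
  ultimately show "\<exists>T. open T \<and> y \<in> T \<and> T \<subseteq> range k" by blast
qed

text \<open>On a compact manifold there is \<open>\<eta> > 0\<close> such that every continuous injective
  self-map moving points by less than \<open>\<eta>\<close> is surjective: its image is open and closed,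
  hence meets every connected open set of Lebesgue-number size in which it appears.\<close>

lemma manifold_small_injections_surjective:
  assumes M: "closed_manifold TYPE('e::euclidean_space) (UNIV :: 'a::metric_space set)"
  obtains \<eta> where "\<eta> > 0"
    "\<And>k::'a \<Rightarrow> 'a. continuous_on UNIV k \<Longrightarrow> inj k \<Longrightarrow> (\<forall>x. dist (k x) x < \<eta>) \<Longrightarrow> surj k"
proof -
  have compact: "compact (UNIV :: 'a set)" by (rule manifold_compact[OF M])
  have "UNIV \<subseteq> \<Union>{C::'a set. open C \<and> connected C}"
    using manifold_connected_nbhd[OF M] by blast
  then obtain \<eta> where \<eta>: "\<eta> > 0" and lebesgue: "\<And>x::'a. \<exists>C. open C \<and> connected C \<and> ball x \<eta> \<subseteq> C"
    using Heine_Borel_lemma[OF compact] by (metis (no_types, lifting) UNIV_I mem_Collect_eq)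
  have "surj k" if k: "continuous_on UNIV k" "inj k" and small: "\<forall>x. dist (k x) x < \<eta>"
    for k :: "'a \<Rightarrow> 'a"
  proof -
    have "open (range k)" by (rule manifold_open_image[OF M k])
    moreover have "closed (range k)"
      using compact_continuous_image[OF k(1) compact] compact_imp_closed by blast
    moreover have "y \<in> range k" if "open (range k)" "closed (range k)" for y
    proof -
      obtain C where C: "open C" "connected C" "ball y \<eta> \<subseteq> C" using lebesgue by blast
      have "y \<in> C" "k y \<in> C" using C(3) \<eta> small by (auto simp: dist_commute)
      moreover have "openin (top_of_set C) (C \<inter> range k)" "closedin (top_of_set C) (C \<inter> range k)"
        using that by (simp_all add: openin_open_Int closedin_closed_Int)
      then have "C \<inter> range k = {} \<or> C \<inter> range k = C" using C(2) connected_clopen by blast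
      ultimately show ?thesis by blast
    qed
    ultimately show ?thesis by blast
  qed
  then show ?thesis using that \<eta> by blast
qed

section \<open>Conjugacies from traced orbits\<close>

definition traces :: "('a::metric_space \<Rightarrow> 'a) \<Rightarrow> ('a \<Rightarrow> 'a) \<Rightarrow> real \<Rightarrow> bool" where
  "traces F G e \<longleftrightarrow> (\<forall>x. \<exists>y. \<forall>n. dist (zpow F n x) (zpow G n y) \<le> e)"

lemma tracing_of_small_perturbations:
  assumes "persistent f \<or> weak_shadowing f" "e > 0"
  obtains \<delta> where "\<delta> > 0" "\<And>g. homeo g \<Longrightarrow> dC0 f g < \<delta> \<Longrightarrow> traces f g e \<or> traces g f e"
  using assms(1)
proof
  assume "persistent f"
  then obtain \<delta> where "\<delta> > 0" and persists: "\<And>g. homeo g \<and> dC0 f g < \<delta> \<Longrightarrow>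
      \<forall>x. \<exists>y. \<forall>n::int. dist (zpow f n x) (zpow g n y) < e"
    using assms(2) unfolding persistent_def by blast
  have "traces f g e" if "homeo g" "dC0 f g < \<delta>" for g
    using persists[of g] that unfolding traces_def by (meson less_imp_le)
  then show ?thesis using that \<open>\<delta> > 0\<close> by blast
next
  assume "weak_shadowing f"
  then obtain \<delta> where "\<delta> > 0" and shadows: "\<And>g. homeo g \<and> dC0 f g < \<delta> \<Longrightarrow>
      \<forall>x. \<exists>y. \<forall>n::int. dist (zpow f n y) (zpow g n x) < e"
    using assms(2) unfolding weak_shadowing_def by blast
  have "traces g f e" if "homeo g" "dC0 f g < \<delta>" for g
    using shadows[of g] that unfolding traces_def by (metis dist_commute less_imp_le)
  then show ?thesis using that \<open>\<delta> > 0\<close> by blast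
qed

text \<open>Two \<open>F\<close>-orbits that stay \<open>e\<close>-close to one and the same \<open>G\<close>-orbit are
  \<open>2e\<close>-close to each other, hence equal if \<open>2e\<close> is an expansivity constant.\<close>

lemma orbits_near_common_orbit_eq:
  assumes "expansivity_constant F (2 * e)"
    and "\<forall>n. dist (zpow F n u) (zpow G n w) \<le> e" "\<forall>n. dist (zpow F n v) (zpow G n w) \<le> e"
  shows "u = v"
proof -
  have "dist (zpow F n u) (zpow F n v) \<le> 2 * e" for n
    using dist_triangle3[of "zpow F n u" "zpow F n v" "zpow G n w"] assms(2,3)
    by (smt (verit) dist_commute)
  then show ?thesis using assms(1) unfolding expansivity_constant_def by blast
qed

text \<open>The relation "the \<open>F\<close>-orbit of the first point is \<open>e\<close>-traced by the
  \<open>G\<close>-orbit of the second" is closed, as an intersection of closed sets.\<close>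

lemma closed_tracing_relation:
  assumes "homeo F" "homeo G"
  shows "closed {p. \<forall>n. dist (zpow F n (fst p)) (zpow G n (snd p)) \<le> e}"
proof -
  have "closed {p. dist (zpow F n (fst p)) (zpow G n (snd p)) \<le> e}" for n
  proof (rule closed_Collect_le)
    show "continuous_on UNIV (\<lambda>p. dist (zpow F n (fst p)) (zpow G n (snd p)))"
      by (intro continuous_on_dist continuous_on_id
          continuous_on_compose2[OF continuous_on_zpow[OF assms(1)] continuous_on_fst]
          continuous_on_compose2[OF continuous_on_zpow[OF assms(2)] continuous_on_snd]) auto
  qed (simp add: continuous_on_const)
  then have "closed (\<Inter>n. {p. dist (zpow F n (fst p)) (zpow G n (snd p)) \<le> e})" by blast
  moreover have "(\<Inter>n. {p. dist (zpow F n (fst p)) (zpow G n (snd p)) \<le> e}) =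
      {p. \<forall>n. dist (zpow F n (fst p)) (zpow G n (snd p)) \<le> e}" by blast
  ultimately show ?thesis by simp
qed

lemma continuous_if_closed_graph:
  fixes k :: "'a::metric_space \<Rightarrow> 'b::metric_space"
  assumes "compact (UNIV :: 'a set)" "compact (UNIV :: 'b set)"
    and graph: "closed (range (\<lambda>x. (x, k x)))"
  shows "continuous_on UNIV k"
  unfolding continuous_on_closed_vimage[OF closed_UNIV]
proof (intro allI impI)
  fix B :: "'b set" assume "closed B"
  have "compact (range (\<lambda>x. (x, k x)) \<inter> (UNIV \<times> B))"
    using closed_Int_compact[OF closed_Int[OF graph closed_Times[OF closed_UNIV \<open>closed B\<close>]]
        compact_Times[OF assms(1,2)]] by simp
  then have "compact (fst ` (range (\<lambda>x. (x, k x)) \<inter> (UNIV \<times> B)))"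
    by (intro compact_continuous_image continuous_on_fst continuous_on_id)
  moreover have "fst ` (range (\<lambda>x. (x, k x)) \<inter> (UNIV \<times> B)) = k -` B \<inter> UNIV" by force
  ultimately show "closed (k -` B \<inter> UNIV)" by (metis compact_imp_closed)
qed

text \<open>A homeomorphism moving points by at most \<open>e\<close> is \<open>2e\<close>-close to the identity, since
  its inverse moves points by at most \<open>e\<close> as well.\<close>

lemma dC0_id_le:
  assumes "homeo k" "\<And>x. dist (k x) x \<le> e"
  shows "dC0 k id \<le> 2 * e"
proof -
  have "surj k" using homeo_props(1)[OF assms(1)] bij_is_surj by blast
  then have "dist (inv_into UNIV k x) x \<le> e" for x
    using assms(2)[of "inv_into UNIV k x"] by (simp add: surj_f_inv_f dist_commute)
  then have "(SUP x. dist (inv_into UNIV k x) (id x)) \<le> e" by (intro cSUP_least) auto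
  moreover have "(SUP x. dist (k x) (id x)) \<le> e" using assms(2) by (intro cSUP_least) auto
  ultimately show ?thesis by (simp add: dC0_def inv_id)
qed

lemma conjugacy_inverse:
  assumes "homeo k" "G \<circ> k = k \<circ> F"
  shows "homeo (inv_into UNIV k)" "F \<circ> inv_into UNIV k = inv_into UNIV k \<circ> G"
    "dC0 (inv_into UNIV k) id = dC0 k id"
proof -
  have k: "bij k" "inv_into UNIV (inv_into UNIV k) = k" using homeo_props[OF assms(1)] by blast+
  show "homeo (inv_into UNIV k)" using homeo_inv[OF assms(1)] .
  have "F (inv_into UNIV k y) = inv_into UNIV k (G y)" for y
    using fun_cong[OF assms(2), of "inv_into UNIV k y"] k(1)
    by (simp add: bij_inv_eq_iff bij_is_surj surj_f_inv_f)
  then show "F \<circ> inv_into UNIV k = inv_into UNIV k \<circ> G" by (simp add: fun_eq_iff)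
  show "dC0 (inv_into UNIV k) id = dC0 k id" by (simp add: dC0_def k(2) inv_id add.commute)
qed

lemma tracing_conjugacy:
  fixes F G :: "'a::metric_space \<Rightarrow> 'a"
  assumes hF: "homeo F" and hG: "homeo G" and compact: "compact (UNIV :: 'a set)"
    and expF: "expansivity_constant F (2 * e)" and expG: "expansivity_constant G (2 * e)"
    and "traces F G e"
    and onto: "\<And>k :: 'a \<Rightarrow> 'a. continuous_on UNIV k \<Longrightarrow> inj k \<Longrightarrow> (\<forall>x. dist (k x) x \<le> e) \<Longrightarrow> surj k"
  shows "\<exists>k. homeo k \<and> G \<circ> k = k \<circ> F \<and> dC0 k id \<le> 2 * e"
proof -
  define R where "R x y \<longleftrightarrow> (\<forall>n. dist (zpow F n x) (zpow G n y) \<le> e)" for x y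
  define k where "k x = (SOME y. R x y)" for x
  have Rk: "R x (k x)" for x
  proof -
    have "\<exists>y. R x y" using \<open>traces F G e\<close> unfolding traces_def R_def by blast
    then show ?thesis unfolding k_def by (rule someI_ex)
  qed
  have unique: "y = k x" if "R x y" for x y
    using orbits_near_common_orbit_eq[OF expG, where u = y and v = "k x" and G = F and w = x]
      that Rk[of x] unfolding R_def by (simp add: dist_commute)
  have "inj k"
  proof (rule injI)
    fix x y assume "k x = k y"
    then show "x = y"
      using orbits_near_common_orbit_eq[OF expF, where u = x and v = y and w = "k x"]
        Rk[of x] Rk[of y] unfolding R_def by simp
  qed
  have small: "dist (k x) x \<le> e" for x
  proof -
    have "dist (zpow F 0 x) (zpow G 0 (k x)) \<le> e" using Rk[of x] unfolding R_def by blast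
    then show ?thesis by (simp add: dist_commute)
  qed
  have "bij F" "bij G" using homeo_props hF hG by auto
  have "G (k x) = k (F x)" for x
  proof (rule unique)
    show "R (F x) (G (k x))"
      using Rk[of x] unfolding R_def zpow_succ_right[OF \<open>bij F\<close>, symmetric]
        zpow_succ_right[OF \<open>bij G\<close>, symmetric] by simp
  qed
  then have conj: "G \<circ> k = k \<circ> F" by (simp add: fun_eq_iff)
  have "range (\<lambda>x. (x, k x)) = {p. R (fst p) (snd p)}" using Rk unique by force
  then have "closed (range (\<lambda>x. (x, k x)))"
    using closed_tracing_relation[OF hF hG, of e] by (simp add: R_def)
  then have "continuous_on UNIV k" by (rule continuous_if_closed_graph[OF compact compact])
  moreover have "range k = UNIV" using onto[OF calculation \<open>inj k\<close>] small by blast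
  ultimately obtain k' where "homeomorphism UNIV UNIV k k'"
    using homeomorphism_compact[OF compact] \<open>inj k\<close> by blast
  then have "homeo k" unfolding homeo_def by blast
  then show ?thesis using conj dC0_id_le[OF \<open>homeo k\<close> small] by blast
qed

text \<open>On a one-point space every map is conjugate to every other by the identity.\<close>

lemma lipschitz_structurally_stable_trivial:
  fixes f :: "'a::metric_space \<Rightarrow> 'a"
  assumes "\<And>a b::'a. a = b"
  shows "lipschitz_structurally_stable f"
proof -
  have "homeo (id :: 'a \<Rightarrow> 'a)" unfolding homeo_def id_def using homeomorphism_ident by blast
  moreover have "dC0 (id :: 'a \<Rightarrow> 'a) id = 0" by (simp add: dC0_def)
  moreover have "f \<circ> id = id \<circ> g" for g :: "'a \<Rightarrow> 'a" using assms by (simp add: fun_eq_iff)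
  ultimately show ?thesis unfolding lipschitz_structurally_stable_def by (metis zero_less_one)
qed

lemma conjugacy_of_tracing_perturbations:
  fixes f :: "'a::metric_space \<Rightarrow> 'a"
  assumes M: "closed_manifold TYPE('e::euclidean_space) (UNIV :: 'a set)"
    and bf: "bilipschitz_homeo f" and "f_hyperbolic f" and "a \<noteq> (b::'a)" and "\<epsilon> > 0"
  obtains e \<delta> where "e > 0" "\<delta> > 0"
    "\<And>g. bilipschitz_homeo g \<Longrightarrow> dL f g < \<delta> \<Longrightarrow> traces f g e \<or> traces g f e \<Longrightarrow>
       \<exists>h. homeo h \<and> f \<circ> h = h \<circ> g \<and> dC0 h id < \<epsilon>"
proof -
  have compact: "compact (UNIV :: 'a set)" by (rule manifold_compact[OF M])
  have hf: "homeo f" using bf by (simp add: bilipschitz_homeo_def)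
  obtain d0 lam where "d0 > 0" "lam > 1" and hyp: "hyperbolic_at_scale f d0 lam"
    using \<open>f_hyperbolic f\<close> f_hyperbolic_iff by blast
  obtain \<eta> where "\<eta> > 0" and onto_small: "\<And>k::'a \<Rightarrow> 'a. continuous_on UNIV k \<Longrightarrow> inj k \<Longrightarrow>
      (\<forall>x. dist (k x) x < \<eta>) \<Longrightarrow> surj k"
    using manifold_small_injections_surjective[OF M] by blast
  define e where "e = min (\<epsilon> / 3) (min (\<eta> / 2) (d0 / 3))"
  have e: "e > 0" "2 * e < \<epsilon>" "e < \<eta>" "2 * e < d0"
    using \<open>\<epsilon> > 0\<close> \<open>\<eta> > 0\<close> \<open>d0 > 0\<close> by (auto simp: e_def min_def)
  have onto: "surj k" if "continuous_on UNIV k" "inj k" "\<forall>x. dist (k x) x \<le> e" for k :: "'a \<Rightarrow> 'a"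
    using onto_small[OF that(1,2)] that(3) e(3) by (meson le_less_trans)
  have expf: "expansivity_constant f (2 * e)"
    using hyperbolic_imp_expansive[OF _ \<open>lam > 1\<close> hyp e(4)] homeo_props(1)[OF hf] by blast
  have "\<exists>h. homeo h \<and> f \<circ> h = h \<circ> g \<and> dC0 h id < \<epsilon>"
    if bg: "bilipschitz_homeo g" and "dL f g < ln lam"
      and tracing: "traces f g e \<or> traces g f e" for g
  proof -
    have hg: "homeo g" using bg by (simp add: bilipschitz_homeo_def)
    have expg: "expansivity_constant g (2 * e)"
      using perturbation_expansive[OF compact \<open>a \<noteq> b\<close> bf bg \<open>lam > 1\<close> hyp] \<open>dL f g < ln lam\<close> e(4)
      by blast
    from tracing show ?thesis
    proof
      assume "traces f g e"
      then obtain k where "homeo k" "g \<circ> k = k \<circ> f" "dC0 k id \<le> 2 * e"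
        using tracing_conjugacy[OF hf hg compact expf expg _ onto] by blast
      then show ?thesis using conjugacy_inverse[of k g f] e(2) by (metis le_less_trans)
    next
      assume "traces g f e"
      then obtain k where "homeo k" "f \<circ> k = k \<circ> g" "dC0 k id \<le> 2 * e"
        using tracing_conjugacy[OF hg hf compact expg expf _ onto] by blast
      then show ?thesis using e(2) by (metis le_less_trans)
    qed
  qed
  then show ?thesis using that[of e "ln lam"] e(1) \<open>lam > 1\<close> by simp
qed

theorem mainTheorem8:
  fixes f :: "'a::metric_space \<Rightarrow> 'a"
  assumes "closed_manifold TYPE('e::euclidean_space) (UNIV :: 'a set)"
    and "bilipschitz_homeo f"
    and "f_hyperbolic f"
    and "persistent f \<or> weak_shadowing f"
  shows "lipschitz_structurally_stable f"
proof (cases "\<exists>a b::'a. a \<noteq> b")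
  case False
  then show ?thesis using lipschitz_structurally_stable_trivial by blast
next
  case True
  then obtain a b :: 'a where "a \<noteq> b" by blast
  have compact: "compact (UNIV :: 'a set)" by (rule manifold_compact[OF assms(1)])
  show ?thesis unfolding lipschitz_structurally_stable_def
  proof (intro allI impI)
    fix \<epsilon> :: real assume "\<epsilon> > 0"
    obtain e \<delta> where "e > 0" "\<delta> > 0" and conjugate: "\<And>g. bilipschitz_homeo g \<Longrightarrow> dL f g < \<delta> \<Longrightarrow>
        traces f g e \<or> traces g f e \<Longrightarrow> \<exists>h. homeo h \<and> f \<circ> h = h \<circ> g \<and> dC0 h id < \<epsilon>"
      using conjugacy_of_tracing_perturbations[OF assms(1-3) \<open>a \<noteq> b\<close> \<open>\<epsilon> > 0\<close>] by blast
    obtain \<delta>' where "\<delta>' > 0" and tracing: "\<And>g. homeo g \<Longrightarrow> dC0 f g < \<delta>' \<Longrightarrow> traces f g e \<or> traces g f e"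
      using tracing_of_small_perturbations[OF assms(4) \<open>e > 0\<close>] by blast
    show "\<exists>\<delta>>0. \<forall>g. bilipschitz_homeo g \<and> dL f g < \<delta> \<longrightarrow> (\<exists>h. homeo h \<and> f \<circ> h = h \<circ> g \<and> dC0 h id < \<epsilon>)"
    proof (intro exI[of _ "min \<delta> \<delta>'"] conjI allI impI)
      show "min \<delta> \<delta>' > 0" using \<open>\<delta> > 0\<close> \<open>\<delta>' > 0\<close> by simp
      fix g assume g: "bilipschitz_homeo g \<and> dL f g < min \<delta> \<delta>'"
      then have "dC0 f g < \<delta>'" using dL_dominates(1)[OF compact \<open>a \<noteq> b\<close> assms(2)] by fastforce
      then have "traces f g e \<or> traces g f e" using tracing g by (simp add: bilipschitz_homeo_def)
      then show "\<exists>h. homeo h \<and> f \<circ> h = h \<circ> g \<and> dC0 h id < \<epsilon>" using conjugate g by simp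
    qed
  qed
qed

end
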